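(* Let $\mathcal H$, $V_0$ (bounded self-adjoint positive definite with bounded inverse), $C:\mathcal H\to\mathbb R^k$ and $X:\mathcal H\to\mathbb R^n$ be such that $K=XV_0^{-1}X^\top$ is invertible, and suppose $XV_0^{-1/2}=ZCV_0^{-1/2}+J$ where $Z\in\mathbb R^{n\times k}$ has rank $k$ (its rows span $\mathbb R^k$) and $J:\mathcal H\to\mathbb R^n$ satisfies $CV_0^{-1/2}J^\top=0$. Let $L_\dagger=CV_0^{-1}X^\top K^{-1}$ and $Z^\dagger$ the Moore–Penrose pseudo-inverse of $Z$. Then $$\|(C-L_\dagger X)V_0^{-1/2}\|_F\le\|J\|_F\,\|Z^\dagger\|_F,$$ i.e. $L_\dagger$ has relative $\nu$-bias $\|(C-L_\dagger X)V_0^{-1/2}\|_F^2\le\nu^2\|L_\dagger\|_F^2$ with $\nu=\|J\|_F\|Z^\dagger\|_F/\|L_\dagger\|_F$.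
   Context: $\|\cdot\|_F$ is the Frobenius (Hilbert–Schmidt) norm; $\cdot^\top$ the adjoint. *)

theory Defs
  imports "HOL-Analysis.Analysis"
begin

definition hadj :: "('a::real_inner \<Rightarrow> 'b::real_inner) \<Rightarrow> 'b \<Rightarrow> 'a" where
  "hadj A = (\<lambda>y. THE z. \<forall>x. inner (A x) y = inner x z)"

definition selfadjoint_op :: "('a::real_inner \<Rightarrow> 'a) \<Rightarrow> bool" where
  "selfadjoint_op A \<longleftrightarrow> (\<forall>x y. inner (A x) y = inner x (A y))"

definition positive_op :: "('a::real_inner \<Rightarrow> 'a) \<Rightarrow> bool" where
  "positive_op A \<longleftrightarrow> (\<forall>x. 0 \<le> inner (A x) x)"

definition posdef_op :: "('a::real_inner \<Rightarrow> 'a) \<Rightarrow> bool" where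
  "posdef_op A \<longleftrightarrow> (\<forall>x. x \<noteq> 0 \<longrightarrow> 0 < inner (A x) x)"

definition is_pos_sqrt :: "('a::real_inner \<Rightarrow> 'a) \<Rightarrow> ('a \<Rightarrow> 'a) \<Rightarrow> bool" where
  "is_pos_sqrt W A \<longleftrightarrow> bounded_linear W \<and> selfadjoint_op W \<and> positive_op W \<and> (\<forall>x. W (W x) = A x)"

definition frob_op :: "('a::real_inner \<Rightarrow> real^'m) \<Rightarrow> real" where
  "frob_op A = sqrt (\<Sum>i\<in>UNIV. (norm (hadj A (axis i 1)))\<^sup>2)"

definition frob_mat :: "real^'c^'r \<Rightarrow> real" where
  "frob_mat M = sqrt (\<Sum>i\<in>UNIV. \<Sum>j\<in>UNIV. (M $ i $ j)\<^sup>2)"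

definition pinv :: "real^'c^'r \<Rightarrow> real^'r^'c" where
  "pinv M = (THE P. M ** P ** M = M \<and> P ** M ** P = P \<and>
                    transpose (M ** P) = M ** P \<and> transpose (P ** M) = P ** M)"

end

theory Submission
  imports Defs
begin

text \<open>Write A = X W with W = V0^(-1/2). Then Q = A^T K^(-1) A is the orthogonal projection
  onto the range of A^T, and the bias operator is C W (1 - Q). Since Z has full column rank,
  Z^+ is a left inverse of Z, so the decomposition gives C W = Z^+ (A - J); as A Q = A, the bias
  equals Z^+ J (Q - 1). Its adjoint sends the i-th basis vector to (Q - 1) J^T z_i, where z_i is
  the i-th row of Z^+; because 1 - Q is a contraction, this has norm at most
  |J^T z_i| <= |z_i| |J|_F by Cauchy-Schwarz, and summing squares over i gives the bound.

  Adjoints of bounded maps into R^n come from the Riesz representation theorem, obtained by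
  minimising |x|^2/2 - f x: minimising sequences are Cauchy by the parallelogram law.\<close>

lemma quadratic_nonneg_imp_linear_coeff_zero:
  fixes a c :: real
  assumes nonneg: "\<And>t. 0 \<le> t * c + t\<^sup>2 * a"
  shows "c = 0"
proof (rule ccontr)
  assume "c \<noteq> 0"
  define q where "q = 2 * \<bar>a\<bar> + 1"
  have q: "q > 0" by (simp add: q_def)
  have "q\<^sup>2 * ((- c / q) * c + (- c / q)\<^sup>2 * a) = c\<^sup>2 * (a - q)"
    using q by (simp add: field_simps power2_eq_square)
  also have "\<dots> < 0"
    using \<open>c \<noteq> 0\<close> by (simp add: q_def mult_pos_neg)
  finally show False
    using nonneg[of "- c / q"] q by (simp add: mult_less_0_iff)
qed

lemma Cauchy_if_dist_sq_le:
  fixes s :: "nat \<Rightarrow> 'a::metric_space"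
  assumes e: "e \<longlonglongrightarrow> 0"
    and dist: "\<And>m n. (dist (s m) (s n))\<^sup>2 \<le> e m + e n"
  shows "Cauchy s"
proof (rule metric_CauchyI)
  fix \<epsilon> :: real
  assume "\<epsilon> > 0"
  then obtain N where N: "\<And>n. n \<ge> N \<Longrightarrow> e n < \<epsilon>\<^sup>2 / 2"
    using order_tendstoD(2)[OF e, of "\<epsilon>\<^sup>2 / 2"] by (auto simp: eventually_sequentially)
  have "dist (s m) (s n) < \<epsilon>" if "m \<ge> N" "n \<ge> N" for m n
  proof -
    have "(dist (s m) (s n))\<^sup>2 < \<epsilon>\<^sup>2"
      using dist[of m n] N[OF \<open>m \<ge> N\<close>] N[OF \<open>n \<ge> N\<close>] by linarith
    then show ?thesis
      using \<open>\<epsilon> > 0\<close> by (simp add: power_less_imp_less_base)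
  qed
  then show "\<exists>M. \<forall>m\<ge>M. \<forall>n\<ge>M. dist (s m) (s n) < \<epsilon>" by blast
qed

lemma norm_sq_half_minus_linear_has_min:
  fixes f :: "'a::{real_inner,complete_space} \<Rightarrow> real"
  assumes "bounded_linear f"
  shows "\<exists>z. \<forall>x. (norm z)\<^sup>2 / 2 - f z \<le> (norm x)\<^sup>2 / 2 - f x"
proof -
  interpret f: bounded_linear f by fact
  define \<phi> where "\<phi> x = (norm x)\<^sup>2 / 2 - f x" for x
  obtain B where B: "\<And>x. norm (f x) \<le> norm x * B"
    using f.pos_bounded by blast
  have "- (B\<^sup>2 / 2) \<le> \<phi> x" for x
    using B[of x] abs_le_D1[of "f x"] zero_le_power2[of "norm x - B"]
    by (simp add: \<phi>_def power2_eq_square algebra_simps)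
  then have bdd: "bdd_below (range \<phi>)" by (meson bdd_belowI2)
  define d where "d = Inf (range \<phi>)"
  have d_le: "d \<le> \<phi> x" for x
    unfolding d_def using bdd by (simp add: cInf_lower)
  have "\<exists>x. \<phi> x < d + 1 / Suc n" for n
    using cInf_lessD[of "range \<phi>" "d + 1 / Suc n"] by (simp add: d_def)
  then obtain s where s: "\<And>n. \<phi> (s n) < d + 1 / Suc n" by metis
  have "(dist (s m) (s n))\<^sup>2 \<le> 4 / Suc m + 4 / Suc n" for m n
  proof -
    have "\<phi> (s m) + \<phi> (s n) - 2 * \<phi> ((1/2) *\<^sub>R (s m + s n)) = (norm (s m - s n))\<^sup>2 / 4"
      unfolding \<phi>_def power2_norm_eq_inner
      by (simp add: f.add f.scale inner_add inner_diff inner_commute algebra_simps)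
    then show ?thesis
      using s[of m] s[of n] d_le[of "(1/2) *\<^sub>R (s m + s n)"] by (simp add: dist_norm)
  qed
  moreover have "(\<lambda>n. 4 / Suc n) \<longlonglongrightarrow> 0"
    by (rule LIMSEQ_Suc[OF lim_const_over_n])
  ultimately have "Cauchy s"
    by (intro Cauchy_if_dist_sq_le[where e = "\<lambda>n. 4 / Suc n"]) auto
  then obtain z where z: "s \<longlonglongrightarrow> z"
    using Cauchy_convergent_iff convergent_def by blast
  have "(\<lambda>n. \<phi> (s n)) \<longlonglongrightarrow> \<phi> z"
    unfolding \<phi>_def by (intro tendsto_intros z f.tendsto) simp
  moreover have "(\<lambda>n. \<phi> (s n)) \<longlonglongrightarrow> d"
  proof (rule real_tendsto_sandwich)
    show "\<forall>\<^sub>F n in sequentially. d \<le> \<phi> (s n)" using d_le by simp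
    show "\<forall>\<^sub>F n in sequentially. \<phi> (s n) \<le> d + 1 / Suc n" using s by (simp add: less_imp_le)
    show "(\<lambda>n. d + 1 / Suc n) \<longlonglongrightarrow> d"
      using tendsto_add[OF tendsto_const LIMSEQ_Suc[OF lim_inverse_n']] by (simp add: inverse_eq_divide)
  qed simp
  ultimately have "\<phi> z = d" using LIMSEQ_unique by blast
  then show ?thesis using d_le unfolding \<phi>_def by metis
qed

theorem riesz_representation:
  fixes f :: "'a::{real_inner,complete_space} \<Rightarrow> real"
  assumes f: "bounded_linear f"
  shows "\<exists>z. \<forall>x. f x = inner x z"
proof -
  interpret f: bounded_linear f by fact
  obtain z where min: "\<And>x. (norm z)\<^sup>2 / 2 - f z \<le> (norm x)\<^sup>2 / 2 - f x"
    using norm_sq_half_minus_linear_has_min[OF f] by blast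
  have "f y = inner y z" for y
  proof -
    have "0 \<le> t * (inner z y - f y) + t\<^sup>2 * ((norm y)\<^sup>2 / 2)" for t
      using min[of "z + t *\<^sub>R y"] unfolding power2_norm_eq_inner
      by (simp add: f.add f.scale inner_add inner_commute algebra_simps power2_eq_square)
    then show ?thesis
      using quadratic_nonneg_imp_linear_coeff_zero by (fastforce simp: inner_commute)
  qed
  then show ?thesis by blast
qed

lemma hadj_eqI:
  assumes "\<And>x y. inner (A x) y = inner x (B y)"
  shows "hadj A = B"
proof
  fix y
  show "hadj A y = B y"
    unfolding hadj_def
    by (rule the_equality) (use assms vector_eq_ldot in metis)+
qed

lemma inner_hadj:
  fixes A :: "'a::{real_inner,complete_space} \<Rightarrow> real^'n"
  assumes A: "bounded_linear A"
  shows "inner (A x) y = inner x (hadj A y)"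
proof -
  have "\<exists>z. \<forall>x. A x $ i = inner x z" for i
    by (rule riesz_representation) (rule bounded_linear_compose[OF bounded_linear_vec_nth A])
  then obtain z where z: "\<And>i x. A x $ i = inner x (z i)" by metis
  define B where "B y = (\<Sum>i\<in>UNIV. (y $ i) *\<^sub>R z i)" for y :: "real^'n"
  have adj: "inner (A x) y = inner x (B y)" for x y
    unfolding B_def inner_vec_def by (simp add: inner_sum_right z mult.commute)
  then have "hadj A = B" by (rule hadj_eqI)
  with adj show ?thesis by simp
qed

lemma linear_if_adjoint:
  fixes A :: "'a::real_inner \<Rightarrow> 'b::real_inner"
  assumes adj: "\<And>x y. inner (A x) y = inner x (B y)"
  shows "linear B"
proof (rule linearI)
  show "B (y + y') = B y + B y'" for y y'
    by (metis adj inner_add_right vector_eq_ldot)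
  show "B (c *\<^sub>R y) = c *\<^sub>R B y" for c y
    by (metis adj inner_scaleR_right vector_eq_ldot)
qed

lemma bounded_linear_hadj:
  fixes A :: "'a::{real_inner,complete_space} \<Rightarrow> real^'n"
  assumes "bounded_linear A"
  shows "bounded_linear (hadj A)"
  using linear_if_adjoint[OF inner_hadj[OF assms]]
  by (simp add: linear_conv_bounded_linear)

lemma matrix_inv_right:
  assumes "invertible A"
  shows "A ** matrix_inv A = mat 1"
  using assms unfolding matrix_inv_def invertible_def by (metis (mono_tags, lifting) someI_ex)

lemma matrix_inv_left:
  assumes "invertible A"
  shows "matrix_inv A ** A = mat 1"
  using assms unfolding matrix_inv_def invertible_def by (metis (mono_tags, lifting) someI_ex)

lemma invertible_gram_matrix:
  fixes Z :: "real^'k^'n"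
  assumes inj: "inj ((*v) Z)"
  shows "invertible (transpose Z ** Z)"
proof -
  have "inj ((*v) (transpose Z ** Z))"
  proof (rule injI)
    fix x y
    assume "(transpose Z ** Z) *v x = (transpose Z ** Z) *v y"
    then have "inner (x - y) ((transpose Z ** Z) *v (x - y)) = 0"
      by (simp add: matrix_vector_mult_diff_distrib)
    moreover have "inner w ((transpose Z ** Z) *v w) = inner (Z *v w) (Z *v w)" for w
      by (simp add: matrix_vector_mul_assoc[symmetric] dot_lmul_matrix[symmetric] inner_commute)
    ultimately have "inner (Z *v (x - y)) (Z *v (x - y)) = 0" by simp
    then show "x = y"
      using inj by (simp add: matrix_vector_mult_diff_distrib inj_eq)
  qed
  then show ?thesis
    using matrix_left_invertible_injective invertible_left_inverse by blast
qed

lemma pinv_full_column_rank: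
  fixes Z :: "real^'k^'n"
  assumes rk: "rank Z = CARD('k)"
  shows "pinv Z = matrix_inv (transpose Z ** Z) ** transpose Z"
proof -
  define G where "G = transpose Z ** Z"
  define P0 where "P0 = matrix_inv G ** transpose Z"
  have inj: "inj ((*v) Z)" using rk full_rank_injective by blast
  then have G: "invertible G" unfolding G_def by (rule invertible_gram_matrix)
  have G_sym: "transpose G = G" unfolding G_def by (simp add: matrix_transpose_mul)
  have Gi_sym: "transpose (matrix_inv G) = matrix_inv G"
    by (metis G G_sym matrix_inv_left matrix_inv_right matrix_mul_assoc matrix_mul_lid
        matrix_mul_rid matrix_transpose_mul transpose_mat)
  have P0Z: "P0 ** Z = mat 1"
    using matrix_inv_left[OF G] by (simp add: P0_def G_def matrix_mul_assoc)
  show ?thesis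
    unfolding pinv_def G_def[symmetric] P0_def[symmetric]
  proof (rule the_equality)
    have "transpose (Z ** P0) = Z ** P0"
      by (simp add: P0_def matrix_transpose_mul Gi_sym matrix_mul_assoc)
    then show "Z ** P0 ** Z = Z \<and> P0 ** Z ** P0 = P0 \<and>
      transpose (Z ** P0) = Z ** P0 \<and> transpose (P0 ** Z) = P0 ** Z"
      using P0Z by (simp add: matrix_mul_assoc[symmetric])
  next
    fix P
    assume P: "Z ** P ** Z = Z \<and> P ** Z ** P = P \<and>
      transpose (Z ** P) = Z ** P \<and> transpose (P ** Z) = P ** Z"
    \<comment> \<open>P Z = 1 and P = P P^T Z^T together force P P^T = G^(-1)\<close>
    obtain L where "L ** Z = mat 1" using inj matrix_left_invertible_injective by blast
    then have PZ: "P ** Z = mat 1" using P by (metis matrix_mul_assoc matrix_mul_lid)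
    have "P = P ** transpose (Z ** P)" using P by (metis matrix_mul_assoc)
    then have P_eq: "P = (P ** transpose P) ** transpose Z"
      by (simp add: matrix_transpose_mul matrix_mul_assoc)
    then have "(P ** transpose P) ** G = mat 1"
      using PZ unfolding G_def by (metis matrix_mul_assoc)
    then have "P ** transpose P = matrix_inv G"
      by (metis G matrix_inv_right matrix_mul_assoc matrix_mul_lid matrix_mul_rid)
    then show "P = P0" using P_eq by (simp add: P0_def)
  qed
qed

corollary pinv_mult_full_column_rank:
  fixes Z :: "real^'k^'n"
  assumes "rank Z = CARD('k)"
  shows "pinv Z ** Z = mat 1"
proof -
  have "invertible (transpose Z ** Z)"
    using assms full_rank_injective invertible_gram_matrix by blast
  then show ?thesis
    using assms by (simp add: pinv_full_column_rank matrix_mul_assoc[symmetric] matrix_inv_left)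
qed

text \<open>Ki is a right inverse of the Gram matrix A A', so proj = A' Ki A is the orthogonal
  projection onto the range of A'.\<close>

locale gram_projection =
  fixes A :: "'a::real_inner \<Rightarrow> real^'n" and A' :: "real^'n \<Rightarrow> 'a" and Ki :: "real^'n^'n"
  assumes adjoint: "\<And>h y. inner (A h) y = inner h (A' y)"
    and right_inverse: "\<And>y. A (A' (Ki *v y)) = y"
begin

definition proj :: "'a \<Rightarrow> 'a" where
  "proj h = A' (Ki *v A h)"

lemma A_proj: "A (proj h) = A h"
  by (simp add: proj_def right_inverse)

lemma inner_Ki_eq_inner_A': "inner (Ki *v y) z = inner (A' (Ki *v y)) (A' (Ki *v z))"
proof -
  have "inner (Ki *v y) z = inner (A (A' (Ki *v z))) (Ki *v y)"
    by (simp add: right_inverse inner_commute)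
  also have "\<dots> = inner (A' (Ki *v z)) (A' (Ki *v y))"
    by (rule adjoint)
  finally show ?thesis by (simp add: inner_commute)
qed

lemma proj_selfadjoint: "inner (proj h) v = inner h (proj v)"
proof -
  have "inner (proj h) v = inner (Ki *v A h) (A v)"
    unfolding proj_def by (simp add: adjoint[symmetric] inner_commute)
  also have "\<dots> = inner (Ki *v A v) (A h)"
    by (metis inner_Ki_eq_inner_A' inner_commute)
  also have "\<dots> = inner h (proj v)"
    unfolding proj_def by (simp add: adjoint inner_commute)
  finally show ?thesis .
qed

lemma norm_diff_proj_le: "norm (v - proj v) \<le> norm v"
proof -
  have "inner v (proj v) = inner (A v) (Ki *v A v)"
    unfolding proj_def by (simp add: adjoint)
  also have "\<dots> = inner (proj v) (proj v)"
    unfolding proj_def by (simp add: adjoint[symmetric] right_inverse)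
  finally have "inner v (proj v) = inner (proj v) (proj v)" .
  then have "(norm (v - proj v))\<^sup>2 = (norm v)\<^sup>2 - (norm (proj v))\<^sup>2"
    unfolding power2_norm_eq_inner by (simp add: inner_diff inner_commute)
  then show ?thesis
    by (smt (verit) norm_ge_zero power2_le_imp_le zero_le_power2)
qed

end

lemma norm_linear_vec_sq_le:
  fixes L :: "real^'n \<Rightarrow> 'a::real_normed_vector"
  assumes "linear L"
  shows "(norm (L v))\<^sup>2 \<le> (norm v)\<^sup>2 * (\<Sum>j\<in>UNIV. (norm (L (axis j 1)))\<^sup>2)"
proof -
  interpret L: linear L by fact
  have "norm (L v) = norm (\<Sum>j\<in>UNIV. v $ j *\<^sub>R L (axis j 1))"
  proof -
    have "L v = L (\<Sum>j\<in>UNIV. v $ j *s axis j 1)"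
      by (simp add: basis_expansion)
    then show ?thesis
      by (simp add: L.sum L.scale scalar_mult_eq_scaleR)
  qed
  also have "\<dots> \<le> (\<Sum>j\<in>UNIV. \<bar>v $ j\<bar> * \<bar>norm (L (axis j 1))\<bar>)"
    by (rule order_trans[OF norm_sum]) simp
  also have "\<dots> \<le> L2_set (\<lambda>j. v $ j) UNIV * L2_set (\<lambda>j. norm (L (axis j 1))) UNIV"
    by (rule L2_set_mult_ineq)
  also have "\<dots> = norm v * L2_set (\<lambda>j. norm (L (axis j 1))) UNIV"
    by (simp add: norm_vec_def L2_set_def)
  finally have "(norm (L v))\<^sup>2 \<le> (norm v * L2_set (\<lambda>j. norm (L (axis j 1))) UNIV)\<^sup>2"
    by (simp add: power_mono)
  then show ?thesis
    by (simp add: power_mult_distrib L2_set_def sum_nonneg)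
qed

lemma bias_frob_op_le:
  fixes A J :: "'h::{real_inner,complete_space} \<Rightarrow> real^'n" and B :: "'h \<Rightarrow> real^'k"
  assumes "gram_projection A A' Ki"
    and "linear A"
    and J: "bounded_linear J"
    and decomp: "\<And>h. B h = Zp *v (A h - J h)"
  shows "frob_op (\<lambda>h. B h - B (A' (Ki *v A h))) \<le> frob_op J * frob_mat Zp"
proof -
  interpret gram_projection A A' Ki by fact
  interpret A: linear A by fact
  interpret J: bounded_linear J by fact
  define u where "u e = hadj J (e v* Zp)" for e
  define SJ where "SJ = (\<Sum>j\<in>UNIV. (norm (hadj J (axis j 1)))\<^sup>2)"
  have bias: "B h - B (A' (Ki *v A h)) = Zp *v J (proj h - h)" for h
    using A_proj[of h]
    by (simp add: proj_def[symmetric] decomp A.diff J.diff matrix_vector_mult_diff_distrib)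
  have "inner (Zp *v J (proj h - h)) e = inner h (proj (u e) - u e)" for h e
  proof -
    have "inner (Zp *v J (proj h - h)) e = inner (J (proj h - h)) (e v* Zp)"
      by (simp add: dot_lmul_matrix[symmetric] inner_commute)
    also have "\<dots> = inner (proj h) (u e) - inner h (u e)"
      by (simp add: u_def inner_hadj[OF J] inner_diff_left)
    also have "\<dots> = inner h (proj (u e) - u e)"
      by (simp add: proj_selfadjoint inner_diff_right)
    finally show ?thesis .
  qed
  then have hadj_bias: "hadj (\<lambda>h. B h - B (A' (Ki *v A h))) = (\<lambda>e. proj (u e) - u e)"
    unfolding bias by (rule hadj_eqI)
  have "(norm (proj (u e) - u e))\<^sup>2 \<le> (norm (e v* Zp))\<^sup>2 * SJ" for e
  proof -
    have "norm (proj (u e) - u e) \<le> norm (u e)"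
      using norm_diff_proj_le by (simp add: norm_minus_commute)
    then have "(norm (proj (u e) - u e))\<^sup>2 \<le> (norm (u e))\<^sup>2"
      by (simp add: power_mono)
    also have "\<dots> \<le> (norm (e v* Zp))\<^sup>2 * SJ"
      unfolding u_def SJ_def
      by (rule norm_linear_vec_sq_le) (simp add: bounded_linear.linear[OF bounded_linear_hadj[OF J]])
    finally show ?thesis .
  qed
  moreover have "(norm (axis i 1 v* Zp))\<^sup>2 = (\<Sum>j\<in>UNIV. (Zp $ i $ j)\<^sup>2)" for i
  proof -
    have "axis i 1 v* Zp = Zp $ i"
      by (simp add: vec_eq_iff vector_matrix_mult_def axis_def if_distrib[of "\<lambda>x. x * _"] cong: if_cong)
    then show ?thesis
      by (simp only: power2_norm_eq_inner) (simp add: inner_vec_def power2_eq_square)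
  qed
  ultimately have "frob_op (\<lambda>h. B h - B (A' (Ki *v A h)))
      \<le> sqrt (\<Sum>i\<in>UNIV. (\<Sum>j\<in>UNIV. (Zp $ i $ j)\<^sup>2) * SJ)"
    unfolding frob_op_def hadj_bias by (intro real_sqrt_le_mono sum_mono) metis
  also have "\<dots> = frob_mat Zp * frob_op J"
    unfolding frob_op_def frob_mat_def SJ_def
    by (simp only: sum_distrib_right[symmetric] real_sqrt_mult)
  finally show ?thesis by (simp add: mult.commute)
qed

theorem lemmaA4:
  fixes V0 W :: "'h::{real_inner, complete_space} \<Rightarrow> 'h"
    and C :: "'h \<Rightarrow> real^'k"
    and X J :: "'h \<Rightarrow> real^'n"
    and Z :: "real^'k^'n"
  assumes V0_bl: "bounded_linear V0"
    and V0_sa: "selfadjoint_op V0"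
    and V0_pd: "posdef_op V0"
    and V0_bij: "bij V0"
    and V0inv_bl: "bounded_linear (inv V0)"
    and W_sqrt: "is_pos_sqrt W (inv V0)"
    and C_bl: "bounded_linear C"
    and X_bl: "bounded_linear X"
    and J_bl: "bounded_linear J"
    and K_inv: "invertible (matrix (\<lambda>y. X (inv V0 (hadj X y))))"
    and decomp: "\<forall>h. X (W h) = Z *v C (W h) + J h"
    and Z_rank: "rank Z = CARD('k)"
    and orth: "\<forall>y. C (W (hadj J y)) = 0"
  shows "frob_op (\<lambda>h. C (W h)
            - C (inv V0 (hadj X (matrix_inv (matrix (\<lambda>y. X (inv V0 (hadj X y)))) *v X (W h)))))
         \<le> frob_op J * frob_mat (pinv Z)"
proof -
  have W: "bounded_linear W" "\<And>x y. inner (W x) y = inner x (W y)" "\<And>x. inv V0 x = W (W x)"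
    using W_sqrt unfolding is_pos_sqrt_def selfadjoint_op_def by auto
  define K where "K = (\<lambda>y. X (W (W (hadj X y))))"
  define Ki where "Ki = matrix_inv (matrix K)"
  have K_linear: "linear K"
    unfolding K_def
    by (intro bounded_linear.linear bounded_linear_compose[OF X_bl] bounded_linear_compose[OF W(1)]
        bounded_linear_hadj[OF X_bl])
  have K_Ki: "K (Ki *v y) = y" for y
  proof -
    have "invertible (matrix K)"
      using K_inv unfolding K_def W(3) .
    then have "K (Ki *v y) = (matrix K ** Ki) *v y"
      by (simp add: fun_cong[OF matrix_vector_mul(2)[OF K_linear], symmetric]
          matrix_vector_mul_assoc)
    also have "\<dots> = y"
      using \<open>invertible (matrix K)\<close> by (simp add: Ki_def matrix_inv_right)
    finally show ?thesis .
  qed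
  have proj: "gram_projection (\<lambda>h. X (W h)) (\<lambda>y. W (hadj X y)) Ki"
  proof
    show "inner (X (W h)) y = inner h (W (hadj X y))" for h y
      by (simp add: inner_hadj[OF X_bl] W(2))
    show "X (W (W (hadj X (Ki *v y)))) = y" for y
      using K_Ki by (simp add: K_def)
  qed
  have XW_linear: "linear (\<lambda>h. X (W h))"
    by (intro bounded_linear.linear bounded_linear_compose[OF X_bl W(1)])
  have C_decomp: "C (W h) = pinv Z *v (X (W h) - J h)" for h
    using decomp pinv_mult_full_column_rank[OF Z_rank]
    by (simp add: matrix_vector_mul_assoc)
  from bias_frob_op_le[OF proj XW_linear J_bl C_decomp]
  show ?thesis
    unfolding Ki_def K_def W(3) .
qed

end
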